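(* Let $\mathcal W$ be a finite set of arms, $(Y_t(w))_{w\in\mathcal W}$, $t=1,2,\dots$, i.i.d. vectors of potential outcomes with nonzero variance and finite $(2+\delta)$-th moments for some $\delta>0$, $W_t$ assigned with known strictly positive probabilities $e_t(w)=\mathbb P[W_t=w\mid H^{t-1}]$ (the conditional law of $W_t$ given $H^{t-1}$ and current and future potential outcomes depending only on $H^{t-1}$), $Y_t=Y_t(W_t)$, $H^{t-1}=\{(W_s,Y_s)\}_{s<t}$. Fix $w$ and suppose $e_t(w)\ge Ct^{-\alpha}$ for all $t$, for some $\alpha\in[0,1)$ and $C>0$. For each horizon $T$, let $\lambda_t(w)$, $t=1,\dots,T$, be $H^{t-1}$-measurable allocation rates with $\lambda_t(w)<1$ for $t<T$, $\lambda_T(w)=1$, and, for a finite positive constant $C'$, $$\frac{1}{T-t+1}\le\lambda_t(w)\le C'\,\frac{e_t(w)}{t^{-\alpha}+T^{1-\alpha}-t^{1-\alpha}}.$$ Define nonnegative weights $h_t(w)$ recursively by $$\frac{h_t^2(w)}{e_t(w)}=\Big(1-\sum_{s=1}^{t-1}\frac{h_s^2(w)}{e_s(w)}\Big)\lambda_t(w).$$ Then the $h_t(w)$ are $H^{t-1}$-measurable and satisfy: (i) $\big(\sum_{t=1}^T h_t(w)\big)^2\big/\mathbb E\big[\sum_{t=1}^T h_t^2(w)/e_t(w)\big]\to\infty$ in probability; (ii) for some $p>1$, $\sum_{t=1}^T \frac{h_t^2(w)}{e_t(w)}\big/\mathbb E\big[\sum_{t=1}^T\frac{h_t^2(w)}{e_t(w)}\big]\to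 1$ in $L_p$; (iii) for some $\delta>0$, $\sum_{t=1}^T \frac{h_t^{2+\delta}(w)}{e_t^{1+\delta}(w)}\big/\mathbb E\big[\sum_{t=1}^T\frac{h_t^2(w)}{e_t(w)}\big]^{1+\delta/2}\to 0$ in probability; all as $T\to\infty$.
   Context: $H^{t-1}$-measurable means a function of the observed arms and outcomes up to time $t-1$. The weights and allocation rates depend on the horizon $T$. *)

theory Defs
  imports "HOL-Probability.Probability"
begin

definition hist_gen :: "'a measure \<Rightarrow> (nat \<Rightarrow> 'a \<Rightarrow> 'w) \<Rightarrow> (nat \<Rightarrow> 'a \<Rightarrow> 'w \<Rightarrow> real) \<Rightarrow> nat \<Rightarrow> 'a set set" where
  "hist_gen M W Y t =
     (\<Union>s\<in>{1..<t}. {W s -` {a} \<inter> space M | a. True}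
                  \<union> {(\<lambda>\<omega>. Y s \<omega> (W s \<omega>)) -` A \<inter> space M | A. A \<in> sets borel})"

text \<open>H^{t-1} = sigma((W_s, Y_s) : s < t).\<close>
definition Hprev :: "'a measure \<Rightarrow> (nat \<Rightarrow> 'a \<Rightarrow> 'w) \<Rightarrow> (nat \<Rightarrow> 'a \<Rightarrow> 'w \<Rightarrow> real) \<Rightarrow> nat \<Rightarrow> 'a measure" where
  "Hprev M W Y t = sigma (space M) (hist_gen M W Y t)"

text \<open>H^{t-1} enlarged by current and future potential outcomes Y_s(v), s >= t.\<close>
definition Henl :: "'a measure \<Rightarrow> (nat \<Rightarrow> 'a \<Rightarrow> 'w) \<Rightarrow> (nat \<Rightarrow> 'a \<Rightarrow> 'w \<Rightarrow> real) \<Rightarrow> nat \<Rightarrow> 'a measure" where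
  "Henl M W Y t = sigma (space M)
     (hist_gen M W Y t \<union> (\<Union>s\<in>{t..}. \<Union>v. {(\<lambda>\<omega>. Y s \<omega> v) -` A \<inter> space M | A. A \<in> sets borel}))"

end

theory Submission
  imports Defs
begin

text \<open>Since \<open>\<lambda>\<^sub>T = 1\<close>, the recursion is a stick-breaking scheme: the shares
  \<open>q\<^sub>t = h\<^sub>t\<^sup>2 / e\<^sub>t\<close> consume the remaining mass \<open>1 - (\<Sum>s<t. q\<^sub>s)\<close> at rate \<open>\<lambda>\<^sub>t\<close> and
  sum to exactly 1 on every sample path. Hence the normalising expectation is 1 and (ii) is
  trivial. The lower bound \<open>\<lambda>\<^sub>t \<ge> 1 / (T - t + 1)\<close> keeps the remaining mass below
  \<open>(T - t + 1) / T\<close>; with the upper bound on \<open>\<lambda>\<^sub>t\<close> and concavity of \<open>x\<^sup>1\<^sup>-\<^sup>\<alpha>\<close> this gives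
  \<open>q\<^sub>t \<le> m\<^sub>T e\<^sub>t\<close> with \<open>m\<^sub>T = C' / ((1 - \<alpha>) T\<^sup>1\<^sup>-\<^sup>\<alpha>) \<longrightarrow> 0\<close>. Then
  \<open>h\<^sub>t = sqrt (q\<^sub>t e\<^sub>t) \<ge> q\<^sub>t / sqrt m\<^sub>T\<close>, so \<open>(\<Sum>t. h\<^sub>t)\<^sup>2 \<ge> 1 / m\<^sub>T \<longrightarrow> \<infinity>\<close>, which is (i); and
  \<open>h\<^sub>t\<^sup>2\<^sup>+\<^sup>\<delta> / e\<^sub>t\<^sup>1\<^sup>+\<^sup>\<delta> = q\<^sub>t (h\<^sub>t / e\<^sub>t)\<^sup>\<delta> \<le> m\<^sub>T\<^sup>\<delta>\<^sup>/\<^sup>2 q\<^sub>t\<close>, which gives (iii).\<close>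

lemma powr_diff_ge_concave:
  fixes t T a :: real
  assumes "0 < t" "t \<le> T" "0 \<le> a" "a < 1"
  shows "(1 - a) * T powr (-a) * (T - t) \<le> T powr (1 - a) - t powr (1 - a)"
proof -
  have T: "T > 0" using assms by linarith
  have "t powr (1 - a) * T powr a \<le> (1 - a) * t + a * T"
    using Youngs_inequality_0[of "1 - a" a t T] assms T by simp
  then have "t powr (1 - a) \<le> ((1 - a) * t + a * T) * T powr (-a)"
    using T by (simp add: powr_minus field_simps)
  moreover have "T powr (1 - a) = T * T powr (-a)"
    using T by (simp add: powr_diff powr_minus field_simps)
  ultimately show ?thesis by (simp add: algebra_simps)
qed

lemma allocation_denominator_ge:
  fixes t T a :: real
  assumes "0 < t" "t \<le> T" "0 \<le> a" "a < 1"
  shows "(1 - a) * T powr (-a) * (T - t + 1) \<le> t powr (-a) + T powr (1 - a) - t powr (1 - a)"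
proof -
  have "(1 - a) * T powr (-a) \<le> T powr (-a)"
    using assms by (simp add: mult_le_cancel_right1)
  also have "T powr (-a) \<le> t powr (-a)"
    using assms by (intro powr_mono2') auto
  finally show ?thesis
    using powr_diff_ge_concave[OF assms] by (simp add: algebra_simps)
qed

lemma stick_breaking_remainder_le:
  fixes q lam :: "nat \<Rightarrow> real" and T :: nat
  assumes lam: "\<And>t. t \<in> {1..T} \<Longrightarrow> 1 / (real T - real t + 1) \<le> lam t \<and> lam t \<le> 1"
    and q: "\<And>t. t \<in> {1..T} \<Longrightarrow> q t = (1 - sum q {1..<t}) * lam t"
    and t: "1 \<le> t" "t \<le> T"
  shows "0 \<le> 1 - sum q {1..<t} \<and> 1 - sum q {1..<t} \<le> (real T - real t + 1) / T"
  using t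
proof (induction t rule: nat_induct_at_least)
  case base
  then show ?case by simp
next
  case (Suc n)
  let ?R = "1 - sum q {1..<n}"
  have n: "n \<in> {1..T}" and IH: "0 \<le> ?R" "?R \<le> (real T - real n + 1) / T"
    using Suc by auto
  have remainder: "1 - sum q {1..<Suc n} = ?R * (1 - lam n)"
    using q[OF n] Suc.hyps by (simp add: algebra_simps)
  have k: "real T - real n + 1 > 1" "real T > 0" using Suc.prems by auto
  have "?R * (1 - lam n) \<le> ((real T - real n + 1) / T) * (1 - 1 / (real T - real n + 1))"
    using IH lam[OF n] by (intro mult_mono) auto
  also have "\<dots> = (real T - real (Suc n) + 1) / T"
    using k by (simp add: divide_simps)
  finally show ?case
    using remainder IH lam[OF n] by simp
qed

lemma stick_breaking_sum_eq_1:
  fixes q lam :: "nat \<Rightarrow> real"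
  assumes "1 \<le> T" "q T = (1 - sum q {1..<T}) * lam T" "lam T = 1"
  shows "sum q {1..T} = 1"
  using assms by (simp add: sum.last_plus)

lemma stick_breaking_share_le:
  fixes q lam :: "nat \<Rightarrow> real" and T t :: nat and a C e :: real
  assumes lam: "\<And>t. t \<in> {1..T} \<Longrightarrow> 1 / (real T - real t + 1) \<le> lam t \<and> lam t \<le> 1"
    and q: "\<And>t. t \<in> {1..T} \<Longrightarrow> q t = (1 - sum q {1..<t}) * lam t"
    and t: "1 \<le> t" "t \<le> T"
    and a: "0 \<le> a" "a < 1"
    and C: "0 \<le> C" and e: "0 < e"
    and lam_le: "lam t \<le> C * e / (real t powr (-a) + real T powr (1 - a) - real t powr (1 - a))"
  shows "q t \<le> C / ((1 - a) * real T powr (1 - a)) * e"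
proof -
  define k where "k = real T - real t + 1"
  define D where "D = real t powr (-a) + real T powr (1 - a) - real t powr (1 - a)"
  have k: "k \<ge> 1" and T: "real T > 0" using t unfolding k_def by auto
  have R: "0 \<le> 1 - sum q {1..<t}" "1 - sum q {1..<t} \<le> k / T"
    using stick_breaking_remainder_le[OF lam q t] unfolding k_def by auto
  have D_ge: "(1 - a) * real T powr (-a) * k \<le> D"
    using allocation_denominator_ge[of t T a] t a unfolding D_def k_def by simp
  have D_ge_pos: "0 < (1 - a) * real T powr (-a) * k" using a T k by simp
  have lam_nonneg: "0 \<le> lam t"
    using lam[of t] t k unfolding k_def by (auto intro: order_trans[rotated])
  have "q t = (1 - sum q {1..<t}) * lam t" using q t by simp
  also have "\<dots> \<le> (k / T) * (C * e / D)"
    using R lam_le lam_nonneg unfolding D_def by (intro mult_mono) auto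
  also have "\<dots> \<le> (k / T) * (C * e / ((1 - a) * real T powr (-a) * k))"
    using D_ge D_ge_pos C e k T by (intro mult_left_mono divide_left_mono) auto
  also have "\<dots> = C / ((1 - a) * real T powr (1 - a)) * e"
    using k T a by (simp add: powr_diff powr_minus field_simps)
  finally show ?thesis .
qed

lemma sq_div_le_sqrt_mult:
  fixes h e m :: real
  assumes h: "0 \<le> h" and e: "0 < e" and le: "h\<^sup>2 / e \<le> m * e"
  shows "h\<^sup>2 / e \<le> sqrt m * h"
proof -
  have "(h\<^sup>2 / e)\<^sup>2 \<le> (h\<^sup>2 / e) * (m * e)"
    unfolding power2_eq_square[of "h\<^sup>2 / e"] using le e by (intro mult_left_mono) auto
  also have "\<dots> = m * h\<^sup>2" using e by simp
  finally have "h\<^sup>2 / e \<le> sqrt (m * h\<^sup>2)" by (rule real_le_rsqrt)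
  then show ?thesis using h by (simp add: real_sqrt_mult)
qed

lemma powr_div_powr_le:
  fixes h e m d :: real
  assumes h: "0 \<le> h" and e: "0 < e" and le: "h\<^sup>2 / e \<le> m * e" and d: "0 \<le> d"
  shows "h powr (2 + d) / e powr (1 + d) \<le> m powr (d / 2) * (h\<^sup>2 / e)"
proof (cases "h = 0")
  case False
  then have h_pos: "0 < h" using h by simp
  have "0 \<le> m * e"
    using le e by (meson divide_nonneg_pos zero_le_power2 order_trans)
  then have m: "0 \<le> m"
    using e by (simp add: zero_le_mult_iff)
  have "(h / e)\<^sup>2 \<le> m"
    using le e by (simp add: power_divide power2_eq_square field_simps)
  then have "h / e \<le> sqrt m" by (rule real_le_rsqrt)
  then have "(h / e) powr d \<le> sqrt m powr d"
    using h e d by (intro powr_mono2) auto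
  also have "\<dots> = (m powr (1 / 2)) powr d"
    using m by (simp add: powr_half_sqrt)
  also have "\<dots> = m powr (d / 2)"
    by (simp add: powr_powr)
  finally have "(h / e) powr d \<le> m powr (d / 2)" .
  moreover have "h powr (2 + d) / e powr (1 + d) = (h\<^sup>2 / e) * (h / e) powr d"
  proof -
    have "h powr (2 + d) = h\<^sup>2 * h powr d"
      using h_pos by (simp add: powr_add)
    moreover have "e powr (1 + d) = e * e powr d"
      using e by (simp add: powr_add)
    ultimately show ?thesis
      using h_pos e by (simp add: powr_divide)
  qed
  moreover have "0 \<le> h\<^sup>2 / e" using e by simp
  ultimately show ?thesis
    by (metis mult.commute mult_left_mono)
qed simp

lemma space_Hprev [simp]: "space (Hprev M W Y t) = space M"
  unfolding Hprev_def by (simp add: space_measure_of_conv)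

lemma Hprev_borel_measurable_mono:
  assumes "s \<le> t"
  shows "borel_measurable (Hprev M W Y s) \<subseteq> borel_measurable (Hprev M W Y t)"
  unfolding Hprev_def
proof (rule measurable_mono1)
  show "hist_gen M W Y t \<subseteq> Pow (space M)" by (auto simp: hist_gen_def)
  show "hist_gen M W Y s \<subseteq> hist_gen M W Y t"
    unfolding hist_gen_def using assms by (intro SUP_subset_mono) auto
qed

lemma recursive_weights_measurable:
  fixes F :: "nat \<Rightarrow> 'a measure" and h e lam :: "nat \<Rightarrow> 'a \<Rightarrow> real"
  assumes mono: "\<And>s t. s \<le> t \<Longrightarrow> borel_measurable (F s) \<subseteq> (borel_measurable (F t) :: ('a \<Rightarrow> real) set)"
    and e_meas: "\<And>t. t \<in> {1..T} \<Longrightarrow> e t \<in> borel_measurable (F t)"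
    and lam_meas: "\<And>t. t \<in> {1..T} \<Longrightarrow> lam t \<in> borel_measurable (F t)"
    and e_pos: "\<And>t \<omega>. t \<in> {1..T} \<Longrightarrow> \<omega> \<in> space (F t) \<Longrightarrow> 0 < e t \<omega>"
    and h: "\<And>t \<omega>. t \<in> {1..T} \<Longrightarrow> \<omega> \<in> space (F t) \<Longrightarrow>
      0 \<le> h t \<omega> \<and> (h t \<omega>)\<^sup>2 / e t \<omega> = (1 - (\<Sum>s=1..<t. (h s \<omega>)\<^sup>2 / e s \<omega>)) * lam t \<omega>"
    and t: "t \<in> {1..T}"
  shows "h t \<in> borel_measurable (F t)"
  using t
proof (induction t rule: less_induct)
  case (less t)
  have "(\<lambda>\<omega>. \<Sum>s=1..<t. (h s \<omega>)\<^sup>2 / e s \<omega>) \<in> borel_measurable (F t)"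
  proof (intro borel_measurable_sum borel_measurable_divide borel_measurable_power)
    fix s assume s: "s \<in> {1..<t}"
    then show "h s \<in> borel_measurable (F t)" "e s \<in> borel_measurable (F t)"
      using less.IH[of s] less.prems e_meas[of s] mono[of s t] by auto
  qed
  then have sqrt_meas: "(\<lambda>\<omega>. sqrt (e t \<omega> * ((1 - (\<Sum>s=1..<t. (h s \<omega>)\<^sup>2 / e s \<omega>)) * lam t \<omega>)))
      \<in> borel_measurable (F t)"
    using e_meas lam_meas less.prems
    by (intro measurable_compose[OF _ borel_measurable_sqrt] borel_measurable_times
        borel_measurable_diff borel_measurable_const) auto
  show ?case
  proof (rule measurable_cong[THEN iffD1, OF _ sqrt_meas])
    fix \<omega> assume \<omega>: "\<omega> \<in> space (F t)"
    have "(h t \<omega>)\<^sup>2 = e t \<omega> * ((1 - (\<Sum>s=1..<t. (h s \<omega>)\<^sup>2 / e s \<omega>)) * lam t \<omega>)"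
      using h[OF less.prems \<omega>] e_pos[OF less.prems \<omega>] by (simp add: field_simps)
    then show "sqrt (e t \<omega> * ((1 - (\<Sum>s=1..<t. (h s \<omega>)\<^sup>2 / e s \<omega>)) * lam t \<omega>)) = h t \<omega>"
      using h[OF less.prems \<omega>] by (metis real_sqrt_abs abs_of_nonneg)
  qed
qed

lemma tendsto_measure_eventually_empty:
  assumes "\<forall>\<^sub>F T in F. \<forall>\<omega>\<in>space M. \<not> P T \<omega>"
  shows "((\<lambda>T. measure M {\<omega>\<in>space M. P T \<omega>}) \<longlongrightarrow> 0) F"
proof (rule tendsto_eventually)
  show "\<forall>\<^sub>F T in F. measure M {\<omega>\<in>space M. P T \<omega>} = 0"
    using assms by eventually_elim (simp cong: conj_cong)
qed

locale stabilized_weights = prob_space M for M :: "'a measure" +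
  fixes h :: "nat \<Rightarrow> nat \<Rightarrow> 'a \<Rightarrow> real" and e :: "nat \<Rightarrow> 'a \<Rightarrow> real" and m :: "nat \<Rightarrow> real"
  assumes h_nonneg: "\<And>T t \<omega>. 1 \<le> T \<Longrightarrow> t \<in> {1..T} \<Longrightarrow> \<omega> \<in> space M \<Longrightarrow> 0 \<le> h T t \<omega>"
    and e_pos: "\<And>t \<omega>. 1 \<le> t \<Longrightarrow> \<omega> \<in> space M \<Longrightarrow> 0 < e t \<omega>"
    and sum_eq_1: "\<And>T \<omega>. 1 \<le> T \<Longrightarrow> \<omega> \<in> space M \<Longrightarrow> (\<Sum>t=1..T. (h T t \<omega>)\<^sup>2 / e t \<omega>) = 1"
    and sq_div_le: "\<And>T t \<omega>. 1 \<le> T \<Longrightarrow> t \<in> {1..T} \<Longrightarrow> \<omega> \<in> space M \<Longrightarrow>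
      (h T t \<omega>)\<^sup>2 / e t \<omega> \<le> m T * e t \<omega>"
    and m_tendsto_0: "m \<longlonglongrightarrow> 0"
begin

lemma integral_sum_eq_1:
  assumes "1 \<le> T"
  shows "(\<integral>\<xi>. (\<Sum>t=1..T. (h T t \<xi>)\<^sup>2 / e t \<xi>) \<partial>M) = 1"
proof -
  have "(\<integral>\<xi>. (\<Sum>t=1..T. (h T t \<xi>)\<^sup>2 / e t \<xi>) \<partial>M) = (\<integral>\<xi>. 1 \<partial>M)"
    using assms sum_eq_1 by (intro Bochner_Integration.integral_cong) blast+
  then show ?thesis by (simp add: prob_space)
qed

lemma one_le_sqrt_mult_sum:
  assumes "1 \<le> T" "\<omega> \<in> space M"
  shows "1 \<le> sqrt (m T) * (\<Sum>t=1..T. h T t \<omega>)"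
proof -
  have "1 = (\<Sum>t=1..T. (h T t \<omega>)\<^sup>2 / e t \<omega>)" using sum_eq_1 assms by simp
  also have "\<dots> \<le> (\<Sum>t=1..T. sqrt (m T) * h T t \<omega>)"
    using assms h_nonneg e_pos sq_div_le by (intro sum_mono sq_div_le_sqrt_mult) auto
  finally show ?thesis by (simp add: sum_distrib_left)
qed

lemma m_pos: "1 \<le> T \<Longrightarrow> 0 < m T"
proof -
  assume T: "1 \<le> T"
  obtain \<omega> where \<omega>: "\<omega> \<in> space M" using not_empty by blast
  have "0 \<le> (\<Sum>t=1..T. h T t \<omega>)" using h_nonneg T \<omega> by (intro sum_nonneg) auto
  then show "0 < m T"
    using one_le_sqrt_mult_sum[OF T \<omega>] by (smt (verit) mult_nonpos_nonneg real_sqrt_le_0_iff)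
qed

lemma inverse_m_le_sum_sq:
  assumes "1 \<le> T" "\<omega> \<in> space M"
  shows "1 / m T \<le> (\<Sum>t=1..T. h T t \<omega>)\<^sup>2"
proof -
  have "1 \<le> (sqrt (m T) * (\<Sum>t=1..T. h T t \<omega>))\<^sup>2"
    using one_le_sqrt_mult_sum[OF assms] by (simp add: one_le_power)
  then show ?thesis
    using m_pos[OF assms(1)] by (simp add: power_mult_distrib field_simps)
qed

lemma sum_sq_ratio_diverges:
  "(\<lambda>T. measure M {\<omega>\<in>space M.
     (\<Sum>t=1..T. h T t \<omega>)\<^sup>2 / (\<integral>\<xi>. (\<Sum>t=1..T. (h T t \<xi>)\<^sup>2 / e t \<xi>) \<partial>M) \<le> K})
   \<longlonglongrightarrow> 0"
proof (rule tendsto_measure_eventually_empty)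
  have "\<forall>\<^sub>F T in sequentially. m T < 1 / (\<bar>K\<bar> + 1)"
    using m_tendsto_0 by (rule order_tendstoD) simp
  with eventually_ge_at_top[of 1]
  show "\<forall>\<^sub>F T in sequentially. \<forall>\<omega>\<in>space M.
     \<not> (\<Sum>t=1..T. h T t \<omega>)\<^sup>2 / (\<integral>\<xi>. (\<Sum>t=1..T. (h T t \<xi>)\<^sup>2 / e t \<xi>) \<partial>M) \<le> K"
  proof eventually_elim
    case (elim T)
    have "\<bar>K\<bar> + 1 < 1 / m T"
      using elim m_pos[of T] by (simp add: field_simps)
    then have "K < 1 / m T" by linarith
    then show ?case
      using inverse_m_le_sum_sq[of T] integral_sum_eq_1[of T] elim by fastforce
  qed
qed

lemma normalized_sum_Lp_tendsto_0:
  "(\<forall>\<^sub>F T in sequentially. integrable M (\<lambda>\<omega>.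
     \<bar>(\<Sum>t=1..T. (h T t \<omega>)\<^sup>2 / e t \<omega>) / (\<integral>\<xi>. (\<Sum>t=1..T. (h T t \<xi>)\<^sup>2 / e t \<xi>) \<partial>M) - 1\<bar> powr p))
   \<and> (\<lambda>T. \<integral>\<omega>.
     \<bar>(\<Sum>t=1..T. (h T t \<omega>)\<^sup>2 / e t \<omega>) / (\<integral>\<xi>. (\<Sum>t=1..T. (h T t \<xi>)\<^sup>2 / e t \<xi>) \<partial>M) - 1\<bar> powr p \<partial>M)
   \<longlonglongrightarrow> 0"
  (is "(\<forall>\<^sub>F T in sequentially. integrable M (?dev T)) \<and> (\<lambda>T. integral\<^sup>L M (?dev T)) \<longlonglongrightarrow> 0")
proof -
  have "integrable M (?dev T) \<and> integral\<^sup>L M (?dev T) = 0" if T: "1 \<le> T" for T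
  proof -
    have zero: "?dev T \<omega> = 0" if "\<omega> \<in> space M" for \<omega>
      using sum_eq_1[OF T that] integral_sum_eq_1[OF T] by simp
    have "integrable M (?dev T) \<longleftrightarrow> integrable M (\<lambda>_. 0::real)"
      by (rule Bochner_Integration.integrable_cong[OF refl zero])
    moreover have "integral\<^sup>L M (?dev T) = integral\<^sup>L M (\<lambda>_. 0::real)"
      by (rule Bochner_Integration.integral_cong[OF refl zero])
    ultimately show ?thesis by simp
  qed
  then have "\<forall>\<^sub>F T in sequentially. integrable M (?dev T) \<and> integral\<^sup>L M (?dev T) = 0"
    by (rule eventually_sequentiallyI)
  then show ?thesis
    by (auto elim: eventually_mono intro: tendsto_eventually)
qed

lemma sum_powr_div_powr_le:
  assumes "1 \<le> T" "\<omega> \<in> space M" "0 \<le> d"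
  shows "\<bar>\<Sum>t=1..T. h T t \<omega> powr (2 + d) / e t \<omega> powr (1 + d)\<bar> \<le> m T powr (d / 2)"
proof -
  have "(\<Sum>t=1..T. h T t \<omega> powr (2 + d) / e t \<omega> powr (1 + d))
      \<le> (\<Sum>t=1..T. m T powr (d / 2) * ((h T t \<omega>)\<^sup>2 / e t \<omega>))"
    using assms h_nonneg e_pos sq_div_le by (intro sum_mono powr_div_powr_le) auto
  also have "\<dots> = m T powr (d / 2)"
    using sum_eq_1[OF assms(1,2)] by (simp only: sum_distrib_left[symmetric] mult_1_right)
  finally show ?thesis by (simp add: sum_nonneg)
qed

lemma lyapunov_ratio_tendsto_0:
  assumes "0 < d" "0 < \<epsilon>"
  shows "(\<lambda>T. measure M {\<omega>\<in>space M.
     \<bar>(\<Sum>t=1..T. h T t \<omega> powr (2 + d) / e t \<omega> powr (1 + d))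
       / (\<integral>\<xi>. (\<Sum>t=1..T. (h T t \<xi>)\<^sup>2 / e t \<xi>) \<partial>M) powr (1 + d / 2)\<bar> > \<epsilon>})
   \<longlonglongrightarrow> 0"
proof (rule tendsto_measure_eventually_empty)
  have "(\<lambda>T. m T powr (d / 2)) \<longlonglongrightarrow> 0"
  proof (rule tendsto_zero_powrI[OF m_tendsto_0 tendsto_const])
    show "\<forall>\<^sub>F T in sequentially. 0 \<le> m T"
      using eventually_ge_at_top[of 1] by eventually_elim (simp add: m_pos less_imp_le)
  qed (use assms in simp)
  from order_tendstoD(2)[OF this assms(2)] eventually_ge_at_top[of 1]
  show "\<forall>\<^sub>F T in sequentially. \<forall>\<omega>\<in>space M.
     \<not> \<bar>(\<Sum>t=1..T. h T t \<omega> powr (2 + d) / e t \<omega> powr (1 + d))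
       / (\<integral>\<xi>. (\<Sum>t=1..T. (h T t \<xi>)\<^sup>2 / e t \<xi>) \<partial>M) powr (1 + d / 2)\<bar> > \<epsilon>"
  proof eventually_elim
    case (elim T)
    then show ?case
      using sum_powr_div_powr_le[of T _ d] integral_sum_eq_1[of T] assms by fastforce
  qed
qed

end

lemma stick_breaking_stabilized_weights:
  fixes h lam :: "nat \<Rightarrow> nat \<Rightarrow> 'a \<Rightarrow> real" and e :: "nat \<Rightarrow> 'a \<Rightarrow> real"
  assumes "prob_space M" and \<alpha>: "0 \<le> \<alpha>" "\<alpha> < 1" and C': "0 < C'"
    and e_pos: "\<And>t \<omega>. 1 \<le> t \<Longrightarrow> \<omega> \<in> space M \<Longrightarrow> 0 < e t \<omega>"
    and lam_lt1: "\<And>T t \<omega>. 1 \<le> T \<Longrightarrow> t \<in> {1..<T} \<Longrightarrow> \<omega> \<in> space M \<Longrightarrow> lam T t \<omega> < 1"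
    and lam_T: "\<And>T \<omega>. 1 \<le> T \<Longrightarrow> \<omega> \<in> space M \<Longrightarrow> lam T T \<omega> = 1"
    and lam_bounds: "\<And>T t \<omega>. 1 \<le> T \<Longrightarrow> t \<in> {1..T} \<Longrightarrow> \<omega> \<in> space M \<Longrightarrow>
      1 / (real T - real t + 1) \<le> lam T t \<omega> \<and>
      lam T t \<omega> \<le> C' * e t \<omega> / (real t powr (-\<alpha>) + real T powr (1 - \<alpha>) - real t powr (1 - \<alpha>))"
    and h: "\<And>T t \<omega>. 1 \<le> T \<Longrightarrow> t \<in> {1..T} \<Longrightarrow> \<omega> \<in> space M \<Longrightarrow>
      0 \<le> h T t \<omega> \<and> (h T t \<omega>)\<^sup>2 / e t \<omega> = (1 - (\<Sum>s=1..<t. (h T s \<omega>)\<^sup>2 / e s \<omega>)) * lam T t \<omega>"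
  shows "stabilized_weights M h e (\<lambda>T. C' / ((1 - \<alpha>) * real T powr (1 - \<alpha>)))"
proof -
  have lam_unit: "1 / (real T - real t + 1) \<le> lam T t \<omega> \<and> lam T t \<omega> \<le> 1"
    if T: "1 \<le> T" and t: "t \<in> {1..T}" and \<omega>: "\<omega> \<in> space M" for T t \<omega>
  proof -
    have "lam T t \<omega> \<le> 1"
    proof (cases "t = T")
      case True
      then show ?thesis using lam_T T \<omega> by simp
    next
      case False
      then show ?thesis using lam_lt1[OF T _ \<omega>, of t] t by simp
    qed
    then show ?thesis using lam_bounds[OF T t \<omega>] by simp
  qed
  have recursion: "(h T t \<omega>)\<^sup>2 / e t \<omega> = (1 - (\<Sum>s=1..<t. (h T s \<omega>)\<^sup>2 / e s \<omega>)) * lam T t \<omega>"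
    if "1 \<le> T" "t \<in> {1..T}" "\<omega> \<in> space M" for T t \<omega>
    using h[OF that] by blast
  have "(\<lambda>T. C' / (1 - \<alpha>) * real T powr (\<alpha> - 1)) \<longlonglongrightarrow> C' / (1 - \<alpha>) * 0"
    using \<alpha> by (intro tendsto_mult tendsto_const tendsto_neg_powr filterlim_real_sequentially) auto
  then have scale_tendsto_0: "(\<lambda>T. C' / ((1 - \<alpha>) * real T powr (1 - \<alpha>))) \<longlonglongrightarrow> 0"
    by (simp add: powr_diff powr_minus field_simps)
  show ?thesis
  proof (intro stabilized_weights.intro stabilized_weights_axioms.intro)
    fix T t :: nat and \<omega> assume T: "1 \<le> T" and t: "t \<in> {1..T}" and \<omega>: "\<omega> \<in> space M"
    show "0 \<le> h T t \<omega>" using h[OF T t \<omega>] by simp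
    show "(h T t \<omega>)\<^sup>2 / e t \<omega> \<le> C' / ((1 - \<alpha>) * real T powr (1 - \<alpha>)) * e t \<omega>"
    proof (rule stick_breaking_share_le[OF lam_unit[OF T _ \<omega>] recursion[OF T _ \<omega>]])
      show "lam T t \<omega> \<le> C' * e t \<omega> / (real t powr - \<alpha> + real T powr (1 - \<alpha>) - real t powr (1 - \<alpha>))"
        using lam_bounds[OF T t \<omega>] by blast
    qed (use t \<alpha> C' e_pos[OF _ \<omega>, of t] in auto)
  next
    fix T :: nat and \<omega> assume T: "1 \<le> T" and \<omega>: "\<omega> \<in> space M"
    show "(\<Sum>t=1..T. (h T t \<omega>)\<^sup>2 / e t \<omega>) = 1"
      using T recursion[OF T _ \<omega>, of T] lam_T[OF T \<omega>]
      by (intro stick_breaking_sum_eq_1[where lam="\<lambda>t. lam T t \<omega>"]) auto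
  qed (fact assms(1) e_pos scale_tendsto_0)+
qed

theorem theorem2:
  fixes M :: "'a measure"
    and W :: "nat \<Rightarrow> 'a \<Rightarrow> 'w::finite"
    and Y :: "nat \<Rightarrow> 'a \<Rightarrow> 'w \<Rightarrow> real"
    and e :: "nat \<Rightarrow> 'w \<Rightarrow> 'a \<Rightarrow> real"
    and w :: 'w
    and \<delta> \<alpha> C C' :: real
    and lam h :: "nat \<Rightarrow> nat \<Rightarrow> 'a \<Rightarrow> real"
  assumes M: "prob_space M"
    and W_meas: "\<forall>t\<ge>1. W t \<in> measurable M (count_space UNIV)"
    and Y_meas: "\<forall>t\<ge>1. Y t \<in> measurable M (Pi\<^sub>M UNIV (\<lambda>_. borel))"
    and Y_indep: "prob_space.indep_vars M (\<lambda>_. Pi\<^sub>M UNIV (\<lambda>_. borel)) Y {1..}"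
    and Y_ident: "\<forall>t\<ge>1. distr M (Pi\<^sub>M UNIV (\<lambda>_. borel)) (Y t) = distr M (Pi\<^sub>M UNIV (\<lambda>_. borel)) (Y 1)"
    and \<delta>_pos: "\<delta> > 0"
    and Y_moment: "\<forall>v. integrable M (\<lambda>\<omega>. \<bar>Y 1 \<omega> v\<bar> powr (2 + \<delta>))"
    and Y_var: "\<forall>v. (\<integral>\<omega>. (Y 1 \<omega> v - (\<integral>\<xi>. Y 1 \<xi> v \<partial>M))\<^sup>2 \<partial>M) \<noteq> 0"
    and e_pos: "\<forall>t\<ge>1. \<forall>v. \<forall>\<omega>\<in>space M. e t v \<omega> > 0"
    and e_meas: "\<forall>t\<ge>1. \<forall>v. e t v \<in> borel_measurable (Hprev M W Y t)"
    and e_cond: "\<forall>t\<ge>1. \<forall>v. \<forall>A\<in>sets (Henl M W Y t).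
                   measure M (A \<inter> {\<omega>\<in>space M. W t \<omega> = v}) = (LINT \<omega>:A|M. e t v \<omega>)"
    and \<alpha>: "0 \<le> \<alpha>" "\<alpha> < 1"
    and C: "C > 0"
    and e_lower: "\<forall>t\<ge>1. \<forall>\<omega>\<in>space M. e t w \<omega> \<ge> C * real t powr (-\<alpha>)"
    and C': "C' > 0"
    and lam_meas: "\<forall>T\<ge>1. \<forall>t\<in>{1..T}. lam T t \<in> borel_measurable (Hprev M W Y t)"
    and lam_lt1: "\<forall>T\<ge>1. \<forall>t\<in>{1..<T}. \<forall>\<omega>\<in>space M. lam T t \<omega> < 1"
    and lam_T: "\<forall>T\<ge>1. \<forall>\<omega>\<in>space M. lam T T \<omega> = 1"
    and lam_bounds: "\<forall>T\<ge>1. \<forall>t\<in>{1..T}. \<forall>\<omega>\<in>space M.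
                       1 / (real T - real t + 1) \<le> lam T t \<omega> \<and>
                       lam T t \<omega> \<le> C' * e t w \<omega> /
                         (real t powr (-\<alpha>) + real T powr (1 - \<alpha>) - real t powr (1 - \<alpha>))"
    and h_def: "\<forall>T\<ge>1. \<forall>t\<in>{1..T}. \<forall>\<omega>\<in>space M. h T t \<omega> \<ge> 0 \<and>
                  (h T t \<omega>)\<^sup>2 / e t w \<omega> =
                    (1 - (\<Sum>s=1..<t. (h T s \<omega>)\<^sup>2 / e s w \<omega>)) * lam T t \<omega>"
  shows "(\<forall>T\<ge>1. \<forall>t\<in>{1..T}. h T t \<in> borel_measurable (Hprev M W Y t))
    \<and> (\<forall>K::real. (\<lambda>T. measure M {\<omega>\<in>space M.
          (\<Sum>t=1..T. h T t \<omega>)\<^sup>2 / (\<integral>\<xi>. (\<Sum>t=1..T. (h T t \<xi>)\<^sup>2 / e t w \<xi>) \<partial>M) \<le> K})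
        \<longlonglongrightarrow> 0)
    \<and> (\<exists>p>1. (\<forall>\<^sub>F T in sequentially. integrable M (\<lambda>\<omega>.
          \<bar>(\<Sum>t=1..T. (h T t \<omega>)\<^sup>2 / e t w \<omega>) / (\<integral>\<xi>. (\<Sum>t=1..T. (h T t \<xi>)\<^sup>2 / e t w \<xi>) \<partial>M) - 1\<bar> powr p))
        \<and> (\<lambda>T. \<integral>\<omega>.
          \<bar>(\<Sum>t=1..T. (h T t \<omega>)\<^sup>2 / e t w \<omega>) / (\<integral>\<xi>. (\<Sum>t=1..T. (h T t \<xi>)\<^sup>2 / e t w \<xi>) \<partial>M) - 1\<bar> powr p \<partial>M)
        \<longlonglongrightarrow> 0)
    \<and> (\<exists>\<delta>'>0. \<forall>\<epsilon>>0. (\<lambda>T. measure M {\<omega>\<in>space M.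
          \<bar>(\<Sum>t=1..T. h T t \<omega> powr (2 + \<delta>') / e t w \<omega> powr (1 + \<delta>'))
            / (\<integral>\<xi>. (\<Sum>t=1..T. (h T t \<xi>)\<^sup>2 / e t w \<xi>) \<partial>M) powr (1 + \<delta>' / 2)\<bar> > \<epsilon>})
        \<longlonglongrightarrow> 0)"
proof -
  \<comment> \<open>The conclusions hold sample path by sample path.\<close>
  interpret W: stabilized_weights M h "\<lambda>t. e t w" "\<lambda>T. C' / ((1 - \<alpha>) * real T powr (1 - \<alpha>))"
    by (rule stick_breaking_stabilized_weights[OF M \<alpha> C'])
      ((use e_pos in blast), (use lam_lt1 in blast), (use lam_T in blast),
        (use lam_bounds in blast), (use h_def in blast))
  have "h T t \<in> borel_measurable (Hprev M W Y t)" if "1 \<le> T" "t \<in> {1..T}" for T t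
  proof (rule recursive_weights_measurable[where e="\<lambda>t. e t w" and lam="lam T"])
    show "borel_measurable (Hprev M W Y s) \<subseteq> borel_measurable (Hprev M W Y t')" if "s \<le> t'" for s t'
      using that by (rule Hprev_borel_measurable_mono)
    show "\<And>t. t \<in> {1..T} \<Longrightarrow> (\<lambda>\<omega>. e t w \<omega>) \<in> borel_measurable (Hprev M W Y t)"
      using e_meas by simp
    show "\<And>t. t \<in> {1..T} \<Longrightarrow> lam T t \<in> borel_measurable (Hprev M W Y t)"
      using lam_meas that by simp
  qed (use that e_pos h_def in auto)
  then show ?thesis
    using W.sum_sq_ratio_diverges W.normalized_sum_Lp_tendsto_0[of 2] W.lyapunov_ratio_tendsto_0[of 1]
    by (intro conjI exI[of _ "2::real"] exI[of _ "1::real"]) auto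
qed

end
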